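(* Let $b_n$ be the number of vertices of $\mathscr{BG}_+(n)$. Then $b_n=f_n+1$, where $f_1=0$ and for $n>1$ \[ f_n=\sum_{k=1}^{n-1}\binom{n}{k}\left(2^{2^k-1}-f_k-1\right). \]
   Context: For $N=\{1,\ldots,n\}$, a game is a map $v:2^N\to\mathbb{R}$ with $v(\varnothing)=0$. $\mathscr{BG}_+(n)$ is the polytope (in $\mathbb{R}^{2^N\setminus\{\varnothing,N\}}$) of games $v$ with $v(S)\geqslant 0$ for all $S$, $v(N)=1$, and nonempty core $C(v)=\{x\in\mathbb{R}^N:\sum_{i\in S}x_i\geqslant v(S)\ \forall S,\ \sum_{i\in N}x_i=v(N)\}$. *)

theory Defs
  imports Complex_Main
begin

definition coords :: "nat \<Rightarrow> nat set set" where
  "coords n = {S. S \<subseteq> {1..n} \<and> S \<noteq> {} \<and> S \<noteq> {1..n}}"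

text \<open>A point of R^(2^N \ {empty,N}) is a function nat set => real vanishing off coords n.
  The associated game sets v(empty) = 0 and v(N) = 1.\<close>
definition game_of :: "nat \<Rightarrow> (nat set \<Rightarrow> real) \<Rightarrow> (nat set \<Rightarrow> real)" where
  "game_of n v = (\<lambda>S. if S = {1..n} then 1 else if S = {} then 0 else v S)"

definition core :: "nat \<Rightarrow> (nat set \<Rightarrow> real) \<Rightarrow> (nat \<Rightarrow> real) set" where
  "core n g = {x. (\<forall>S. S \<subseteq> {1..n} \<longrightarrow> (\<Sum>i\<in>S. x i) \<ge> g S)
                 \<and> (\<Sum>i\<in>{1..n}. x i) = g {1..n}}"

definition BG_plus :: "nat \<Rightarrow> (nat set \<Rightarrow> real) set" where
  "BG_plus n = {v. (\<forall>S. S \<notin> coords n \<longrightarrow> v S = 0)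
                 \<and> (\<forall>S\<in>coords n. v S \<ge> 0)
                 \<and> core n (game_of n v) \<noteq> {}}"

definition vertices :: "('a \<Rightarrow> real) set \<Rightarrow> ('a \<Rightarrow> real) set" where
  "vertices P = {x \<in> P. \<not> (\<exists>a\<in>P. \<exists>b\<in>P. \<exists>u::real. a \<noteq> b \<and> 0 < u \<and> u < 1
                    \<and> x = (\<lambda>S. (1 - u) * a S + u * b S))}"

fun fseq :: "nat \<Rightarrow> int" where
  "fseq n = (if n \<le> 1 then 0 else
     (\<Sum>k\<in>{1..<n}. int (n choose k) * (2 ^ (2 ^ k - 1) - fseq k - 1)))"

end

theory Submission
  imports Defs "HOL-Library.Indicator_Function"
begin

text \<open>
  A point v lies in BG_+(n) iff 0 <= v(S) <= x(S) on all coordinates for some probability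
  vector x (an element of the core). At a vertex each v(S) is 0 or x(S), since otherwise v(S)
  can be moved both ways; and moving mass between two atoms i, j of x moves v along a line
  inside the polytope unless every S with v(S) > 0 contains both or neither of i, j. Hence
  every such S contains the whole support of x, so v(S) = 1: the vertices are exactly the
  indicators of families of coordinates with a common point.
  Grouping the nonempty families by their intersection I and removing I from every member
  identifies them with the families of proper subsets of N - I with empty intersection. These
  are all 2^(2^|N - I| - 1) families of proper subsets of N - I except those with a common
  point, so summing over I gives the recursion for f_n.
\<close>

definition nonempty_proper_subsets :: "'a set \<Rightarrow> 'a set set" where
  "nonempty_proper_subsets A = {S. S \<subseteq> A \<and> S \<noteq> {} \<and> S \<noteq> A}"

text \<open>The empty family belongs here (its intersection is UNIV); it is the vertex 0 and
  accounts for the summand 1 in b_n = f_n + 1.\<close>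

definition families_with_common_point :: "'a set \<Rightarrow> 'a set set set" where
  "families_with_common_point A = {F. F \<subseteq> nonempty_proper_subsets A \<and> \<Inter>F \<noteq> {}}"

lemma bij_betw_Collect:
  assumes "bij_betw f A B" and "\<And>x. x \<in> A \<Longrightarrow> P x \<longleftrightarrow> Q (f x)"
  shows "bij_betw f {x \<in> A. P x} {y \<in> B. Q y}"
  using assms unfolding bij_betw_def inj_on_def by auto

lemma bij_betw_Diff_supersets:
  assumes "I \<subseteq> A"
  shows "bij_betw (\<lambda>S. S - I) {S. I \<subseteq> S \<and> S \<subseteq> A \<and> S \<noteq> A} (Pow (A - I) - {A - I})"
  by (rule bij_betw_byWitness[where f' = "\<lambda>T. T \<union> I"]) (use assms in auto)

lemma card_families_with_Inter_eq:
  assumes "I \<in> nonempty_proper_subsets A"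
  shows "card {F. F \<subseteq> nonempty_proper_subsets A \<and> \<Inter>F = I}
       = card {G. G \<subseteq> Pow (A - I) - {A - I} \<and> \<Inter>G = {}}"
proof -
  let ?U = "{S. I \<subseteq> S \<and> S \<subseteq> A \<and> S \<noteq> A}"
  have I: "I \<subseteq> A" "I \<noteq> {}" "I \<noteq> A"
    using assms by (auto simp: nonempty_proper_subsets_def)
  have meet: "\<Inter>F = I \<longleftrightarrow> \<Inter>((\<lambda>S. S - I) ` F) = {}" if "F \<subseteq> ?U" for F
    using I that by (cases "F = {}") auto
  have "bij_betw (image (\<lambda>S. S - I)) {F \<in> Pow ?U. \<Inter>F = I} {G \<in> Pow (Pow (A - I) - {A - I}). \<Inter>G = {}}"
    by (rule bij_betw_Collect[OF bij_betw_Pow[OF bij_betw_Diff_supersets[OF I(1)]]]) (use meet in auto)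
  moreover have "{F. F \<subseteq> nonempty_proper_subsets A \<and> \<Inter>F = I} = {F \<in> Pow ?U. \<Inter>F = I}"
    using I by (auto simp: nonempty_proper_subsets_def)
  ultimately show ?thesis
    by (simp add: bij_betw_same_card)
qed

lemma card_families_with_empty_Inter:
  assumes "finite B"
  shows "card {G. G \<subseteq> Pow B - {B} \<and> \<Inter>G = {}} + card (families_with_common_point B)
       = 2 ^ (2 ^ card B - 1)"
proof -
  let ?E = "{G. G \<subseteq> Pow B - {B} \<and> \<Inter>G = {}}"
  have "families_with_common_point B = {G. G \<subseteq> Pow B - {B} \<and> \<Inter>G \<noteq> {}}"
    by (auto simp: families_with_common_point_def nonempty_proper_subsets_def)
  then have "Pow (Pow B - {B}) = ?E \<union> families_with_common_point B"
    and "?E \<inter> families_with_common_point B = {}"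
    by auto
  moreover have "finite (Pow (Pow B - {B}))"
    using assms by simp
  ultimately have "card ?E + card (families_with_common_point B) = card (Pow (Pow B - {B}))"
    using card_Un_disjoint[of ?E "families_with_common_point B"] by (simp del: Pow_iff)
  also have "\<dots> = 2 ^ (2 ^ card B - 1)"
    using assms by (simp add: card_Pow)
  finally show ?thesis .
qed

lemma card_families_with_common_point_by_Inter:
  assumes "finite A"
  shows "card (families_with_common_point A)
       = 1 + (\<Sum>I\<in>nonempty_proper_subsets A. card {F. F \<subseteq> nonempty_proper_subsets A \<and> \<Inter>F = I})"
proof -
  let ?P = "nonempty_proper_subsets A"
  let ?U = "\<Union>I\<in>?P. {F. F \<subseteq> ?P \<and> \<Inter>F = I}"
  have fin: "finite ?P"
    using assms by (simp add: nonempty_proper_subsets_def)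
  have Inter_in: "\<Inter>F \<in> ?P" if F: "F \<subseteq> ?P" "F \<noteq> {}" "\<Inter>F \<noteq> {}" for F
  proof -
    obtain S where "S \<in> F"
      using F(2) by blast
    then have "\<Inter>F \<subseteq> S" "S \<subseteq> A" "S \<noteq> A"
      using F(1) by (auto simp: nonempty_proper_subsets_def)
    then show ?thesis
      using F(3) by (auto simp: nonempty_proper_subsets_def)
  qed
  have "families_with_common_point A = insert {} ?U"
  proof (intro equalityI subsetI)
    fix F assume "F \<in> families_with_common_point A"
    then show "F \<in> insert {} ?U"
      using Inter_in[of F] unfolding families_with_common_point_def by blast
  next
    fix F assume "F \<in> insert {} ?U"
    then show "F \<in> families_with_common_point A"
      by (auto simp: families_with_common_point_def nonempty_proper_subsets_def)
  qed
  moreover have "{} \<notin> ?U"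
    by (auto simp: nonempty_proper_subsets_def)
  moreover have "finite ?U"
    using fin by (auto intro: finite_subset[of _ "Pow ?P"])
  moreover have "card ?U = (\<Sum>I\<in>?P. card {F. F \<subseteq> ?P \<and> \<Inter>F = I})"
    using fin by (intro card_UN_disjoint) (auto intro: finite_subset[of _ "Pow ?P"])
  ultimately show ?thesis
    by simp
qed

lemma sum_nonempty_proper_subsets_complement:
  "(\<Sum>I\<in>nonempty_proper_subsets A. g (A - I)) = (\<Sum>B\<in>nonempty_proper_subsets A. g B)"
  by (rule sum.reindex_bij_betw, rule bij_betw_byWitness[where f' = "\<lambda>B. A - B"])
    (auto simp: nonempty_proper_subsets_def)

lemma sum_nonempty_proper_subsets_card:
  assumes "finite A"
  shows "(\<Sum>B\<in>nonempty_proper_subsets A. h (card B))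
       = (\<Sum>k\<in>{1..<card A}. of_nat (card A choose k) * h k)"
proof -
  have "B \<in> nonempty_proper_subsets A \<longleftrightarrow> B \<subseteq> A \<and> card B \<in> {1..<card A}" for B
  proof (cases "B \<subseteq> A")
    case True
    then have "finite B"
      using assms finite_subset by blast
    have "B \<noteq> A \<longleftrightarrow> card B < card A"
      using True assms by (auto intro: psubset_card_mono)
    moreover have "B \<noteq> {} \<longleftrightarrow> 1 \<le> card B"
      using \<open>finite B\<close> by (simp add: Suc_le_eq card_gt_0_iff)
    ultimately show ?thesis
      using True by (auto simp: nonempty_proper_subsets_def)
  qed (simp add: nonempty_proper_subsets_def)
  then have "nonempty_proper_subsets A = (\<Union>k\<in>{1..<card A}. {B. B \<subseteq> A \<and> card B = k})"
    by blast
  then have "(\<Sum>B\<in>nonempty_proper_subsets A. h (card B))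
      = (\<Sum>k\<in>{1..<card A}. \<Sum>B\<in>{B. B \<subseteq> A \<and> card B = k}. h (card B))"
    using assms by (simp only:) (rule sum.UNION_disjoint, auto)
  also have "\<dots> = (\<Sum>k\<in>{1..<card A}. of_nat (card A choose k) * h k)"
    using assms by (intro sum.cong) (simp_all add: n_subsets)
  finally show ?thesis .
qed

lemma fseq_eq_sum:
  "fseq n = (\<Sum>k\<in>{1..<n}. int (n choose k) * (2 ^ (2 ^ k - 1) - fseq k - 1))"
  by (subst fseq.simps) simp

declare fseq.simps [simp del]

lemma card_families_with_common_point:
  assumes "finite A"
  shows "int (card (families_with_common_point A)) = fseq (card A) + 1"
  using assms
proof (induction "card A" arbitrary: A rule: less_induct)
  case less
  let ?P = "nonempty_proper_subsets A"
  define h :: "nat \<Rightarrow> int" where "h k = 2 ^ (2 ^ k - 1) - fseq k - 1" for k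
  have fibre: "int (card {F. F \<subseteq> ?P \<and> \<Inter>F = I}) = h (card (A - I))" if "I \<in> ?P" for I
  proof -
    have "card (A - I) < card A"
      using that less.prems by (auto simp: nonempty_proper_subsets_def intro: psubset_card_mono)
    then have "int (card (families_with_common_point (A - I))) = fseq (card (A - I)) + 1"
      using less by simp
    moreover have "card {F. F \<subseteq> ?P \<and> \<Inter>F = I} + card (families_with_common_point (A - I))
        = 2 ^ (2 ^ card (A - I) - 1)"
      using card_families_with_Inter_eq[OF that] card_families_with_empty_Inter[of "A - I"] less.prems
      by simp
    then have "int (card {F. F \<subseteq> ?P \<and> \<Inter>F = I}) + int (card (families_with_common_point (A - I)))
        = 2 ^ (2 ^ card (A - I) - 1)"
      by (simp flip: of_nat_add)
    ultimately show ?thesis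
      unfolding h_def by linarith
  qed
  have "int (card (families_with_common_point A)) = 1 + (\<Sum>I\<in>?P. h (card (A - I)))"
    using card_families_with_common_point_by_Inter[OF less.prems] fibre by simp
  also have "\<dots> = 1 + (\<Sum>B\<in>?P. h (card B))"
    using sum_nonempty_proper_subsets_complement[of "\<lambda>B. h (card B)"] by simp
  also have "\<dots> = 1 + (\<Sum>k\<in>{1..<card A}. int (card A choose k) * h k)"
    using less.prems by (simp add: sum_nonempty_proper_subsets_card)
  also have "\<dots> = fseq (card A) + 1"
    unfolding h_def fseq_eq_sum[of "card A"] by simp
  finally show ?case .
qed

definition prob_vector :: "nat \<Rightarrow> (nat \<Rightarrow> real) \<Rightarrow> bool" where
  "prob_vector n x \<longleftrightarrow> (\<forall>j\<in>{1..n}. 0 \<le> x j) \<and> sum x {1..n} = 1"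

lemma prob_vector_sum_bounds:
  assumes "prob_vector n x" and "S \<subseteq> {1..n}"
  shows "0 \<le> sum x S" and "sum x S \<le> 1"
proof -
  show "0 \<le> sum x S"
    using assms by (auto simp: prob_vector_def intro: sum_nonneg)
  have "sum x S \<le> sum x {1..n}"
    using assms by (intro sum_mono2) (auto simp: prob_vector_def)
  then show "sum x S \<le> 1"
    using assms(1) by (simp add: prob_vector_def)
qed

lemma coords_eq: "coords n = nonempty_proper_subsets {1..n}"
  by (auto simp: coords_def nonempty_proper_subsets_def)

lemma coords_subset: "S \<in> coords n \<Longrightarrow> S \<subseteq> {1..n}"
  by (simp add: coords_def)

lemma finite_coords: "S \<in> coords n \<Longrightarrow> finite S"
  by (auto simp: coords_def intro: finite_subset)

lemma BG_plus_iff: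
  "v \<in> BG_plus n \<longleftrightarrow> (\<forall>S. S \<notin> coords n \<longrightarrow> v S = 0)
     \<and> (\<exists>x. prob_vector n x \<and> (\<forall>S\<in>coords n. 0 \<le> v S \<and> v S \<le> sum x S))"
proof
  assume v: "v \<in> BG_plus n"
  then obtain x where x: "x \<in> core n (game_of n v)"
    by (auto simp: BG_plus_def)
  have le: "game_of n v S \<le> sum x S" if "S \<subseteq> {1..n}" for S
    using x that by (simp add: core_def)
  have "0 \<le> x j" if "j \<in> {1..n}" for j
  proof -
    have "0 \<le> game_of n v {j}"
      using v that by (auto simp: BG_plus_def game_of_def coords_def)
    then show ?thesis
      using le[of "{j}"] that by simp
  qed
  moreover have "sum x {1..n} = 1"
    using x by (simp add: core_def game_of_def)
  ultimately have "prob_vector n x"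
    by (simp add: prob_vector_def)
  moreover have "0 \<le> v S \<and> v S \<le> sum x S" if "S \<in> coords n" for S
    using v le[of S] that by (auto simp: coords_def game_of_def BG_plus_def)
  moreover have "\<forall>S. S \<notin> coords n \<longrightarrow> v S = 0"
    using v by (simp add: BG_plus_def)
  ultimately show "(\<forall>S. S \<notin> coords n \<longrightarrow> v S = 0)
     \<and> (\<exists>x. prob_vector n x \<and> (\<forall>S\<in>coords n. 0 \<le> v S \<and> v S \<le> sum x S))"
    by blast
next
  assume "(\<forall>S. S \<notin> coords n \<longrightarrow> v S = 0)
     \<and> (\<exists>x. prob_vector n x \<and> (\<forall>S\<in>coords n. 0 \<le> v S \<and> v S \<le> sum x S))"
  then obtain x where off: "\<forall>S. S \<notin> coords n \<longrightarrow> v S = 0" and x: "prob_vector n x"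
    and bounds: "\<forall>S\<in>coords n. 0 \<le> v S \<and> v S \<le> sum x S"
    by blast
  have "game_of n v S \<le> sum x S" if "S \<subseteq> {1..n}" for S
    using x bounds that by (auto simp: game_of_def coords_def prob_vector_def)
  then have "x \<in> core n (game_of n v)"
    using x by (simp add: core_def game_of_def prob_vector_def)
  then show "v \<in> BG_plus n"
    using off bounds by (auto simp: BG_plus_def)
qed

lemma BG_plus_range:
  assumes "v \<in> BG_plus n"
  shows "0 \<le> v S \<and> v S \<le> 1"
proof (cases "S \<in> coords n")
  case True
  obtain x where "prob_vector n x" "0 \<le> v S" "v S \<le> sum x S"
    using assms True by (auto simp: BG_plus_iff)
  then show ?thesis
    using prob_vector_sum_bounds(2)[of n x S] True by (auto simp: coords_def)
qed (use assms in \<open>simp add: BG_plus_iff\<close>)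

definition family_weight :: "nat set set \<Rightarrow> (nat \<Rightarrow> real) \<Rightarrow> nat set \<Rightarrow> real" where
  "family_weight F x S = (if S \<in> F then sum x S else 0)"

lemma family_weight_in_BG_plus:
  assumes "F \<subseteq> coords n" and "prob_vector n x"
  shows "family_weight F x \<in> BG_plus n"
  unfolding BG_plus_iff using assms prob_vector_sum_bounds(1)[OF assms(2)]
  by (auto simp: family_weight_def coords_def)

lemma vertices_midpoint:
  assumes "v \<in> vertices P" and "a \<in> P" and "b \<in> P" and "v = (\<lambda>S. (a S + b S) / 2)"
  shows "a = b"
proof (rule ccontr)
  assume "a \<noteq> b"
  then have "\<exists>a\<in>P. \<exists>b\<in>P. \<exists>u::real. a \<noteq> b \<and> 0 < u \<and> u < 1 \<and> v = (\<lambda>S. (1 - u) * a S + u * b S)"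
    using assms(4) by (intro bexI[OF _ assms(2)] bexI[OF _ assms(3)] exI[of _ "1/2"]) auto
  then show False
    using assms(1) unfolding vertices_def by blast
qed

lemma convex_combination_0_or_1_imp_eq:
  fixes a b u :: real
  assumes "0 \<le> a" "a \<le> 1" "0 \<le> b" "b \<le> 1" "0 < u" "u < 1"
    and "(1 - u) * a + u * b = 0 \<or> (1 - u) * a + u * b = 1"
  shows "a = b"
proof -
  have "0 \<le> (1 - u) * a" "0 \<le> u * b" "0 \<le> (1 - u) * (1 - a)" "0 \<le> u * (1 - b)"
    using assms by simp_all
  moreover have "(1 - u) * (1 - a) + u * (1 - b) = 1 - ((1 - u) * a + u * b)"
    by (simp add: algebra_simps)
  ultimately have "(1 - u) * a = 0 \<and> u * b = 0 \<or> (1 - u) * (1 - a) = 0 \<and> u * (1 - b) = 0"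
    using assms(7) by linarith
  then show ?thesis
    using assms(5,6) by auto
qed

lemma zero_one_in_vertices:
  assumes "w \<in> P" and "\<And>v S. v \<in> P \<Longrightarrow> 0 \<le> v S \<and> v S \<le> 1"
    and "\<And>S. w S = 0 \<or> w S = 1"
  shows "w \<in> vertices P"
  unfolding vertices_def
proof (intro CollectI conjI assms(1) notI)
  assume "\<exists>a\<in>P. \<exists>b\<in>P. \<exists>u::real. a \<noteq> b \<and> 0 < u \<and> u < 1 \<and> w = (\<lambda>S. (1 - u) * a S + u * b S)"
  then obtain a b u where ab: "a \<in> P" "b \<in> P" "a \<noteq> b" and u: "0 < u" "u < 1"
    and w: "w = (\<lambda>S. (1 - u) * a S + u * b S)"
    by blast
  have "a S = b S" for S
    using assms(2)[OF ab(1), of S] assms(2)[OF ab(2), of S] assms(3)[of S] u w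
    by (intro convex_combination_0_or_1_imp_eq) auto
  with ab(3) show False
    by blast
qed

lemma indicator_in_vertices_BG_plus:
  assumes "F \<subseteq> coords n" and "i \<in> {1..n}" and "\<forall>S\<in>F. i \<in> S"
  shows "indicator F \<in> vertices (BG_plus n)"
proof (rule zero_one_in_vertices)
  have "indicator F = family_weight F (indicator {i})"
    using assms finite_coords by (auto simp: fun_eq_iff family_weight_def indicator_def)
  moreover have "prob_vector n (indicator {i})"
    using assms(2) by (simp add: prob_vector_def indicator_def)
  ultimately show "indicator F \<in> BG_plus n"
    using family_weight_in_BG_plus assms(1) by metis
  show "0 \<le> v S \<and> v S \<le> 1" if "v \<in> BG_plus n" for v S
    using that by (rule BG_plus_range)
  show "indicator F S = 0 \<or> indicator F S = 1" for S
    by (simp add: indicator_def)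
qed

lemma BG_plus_fun_upd:
  assumes "v \<in> BG_plus n" and "prob_vector n x" and "\<forall>S\<in>coords n. v S \<le> sum x S"
    and "S \<in> coords n" and "0 \<le> c" and "c \<le> sum x S"
  shows "v(S := c) \<in> BG_plus n"
  using assms unfolding BG_plus_iff by auto

lemma vertex_BG_plus_eq_family_weight:
  assumes v: "v \<in> vertices (BG_plus n)" and x: "prob_vector n x" and le: "\<forall>S\<in>coords n. v S \<le> sum x S"
  shows "v = family_weight {S \<in> coords n. v S \<noteq> 0} x"
proof
  fix S
  have vP: "v \<in> BG_plus n"
    using v by (simp add: vertices_def)
  show "v S = family_weight {S \<in> coords n. v S \<noteq> 0} x S"
  proof (cases "S \<in> coords n \<and> v S \<noteq> 0")
    case False
    then show ?thesis
      using vP by (auto simp: family_weight_def BG_plus_iff)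
  next
    case True
    define t where "t = min (v S) (sum x S - v S)"
    have "0 \<le> t"
      using le True BG_plus_range[OF vP, of S] by (simp add: t_def)
    have "v(S := v S - t) = v(S := v S + t)"
    proof (rule vertices_midpoint[OF v])
      show "v(S := v S - t) \<in> BG_plus n" "v(S := v S + t) \<in> BG_plus n"
        using True \<open>0 \<le> t\<close> by (auto intro!: BG_plus_fun_upd[OF vP x le] simp: t_def)
      show "v = (\<lambda>T. ((v(S := v S - t)) T + (v(S := v S + t)) T) / 2)"
        by (simp add: fun_eq_iff)
    qed
    then have "v S - t = v S + t"
      by (metis fun_upd_same)
    then have "t = 0"
      by simp
    then show ?thesis
      using True BG_plus_range[OF vP, of S] by (auto simp: t_def family_weight_def min_def split: if_splits)
  qed
qed

lemma sum_move_mass: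
  fixes t :: real
  assumes "finite S"
  shows "(\<Sum>k\<in>S. t * (indicator {i} k - indicator {j} k)) = t * (indicator S i - indicator S j)"
proof -
  have "(\<Sum>k\<in>S. indicator {l} k) = (indicator S l :: real)" for l
    using assms by (simp add: indicator_def of_bool_def sum.delta')
  then show ?thesis
    by (simp add: sum_distrib_left[symmetric] sum_subtractf)
qed

lemma prob_vector_move_mass:
  assumes "prob_vector n x" and "i \<in> {1..n}" and "j \<in> {1..n}" and "\<bar>t\<bar> \<le> x i" and "\<bar>t\<bar> \<le> x j"
  shows "prob_vector n (\<lambda>k. x k + t * (indicator {i} k - indicator {j} k))"
  using assms sum_move_mass[of "{1..n}" t i j] by (auto simp: prob_vector_def sum.distrib indicator_def)

lemma prob_vector_support_nonempty:
  assumes "prob_vector n x"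
  shows "\<exists>i\<in>{1..n}. 0 < x i"
proof (rule ccontr)
  assume "\<not> (\<exists>i\<in>{1..n}. 0 < x i)"
  then have "\<forall>k\<in>{1..n}. x k = 0"
    using assms by (force simp: prob_vector_def)
  then have "sum x {1..n} = 0"
    by simp
  then show False
    using assms by (simp add: prob_vector_def)
qed

lemma prob_vector_sum_eq_1:
  assumes "prob_vector n x" and "S \<subseteq> {1..n}" and "{i \<in> {1..n}. 0 < x i} \<subseteq> S"
  shows "sum x S = 1"
proof -
  have "\<forall>k\<in>{1..n} - S. x k = 0"
    using assms by (force simp: prob_vector_def)
  then have "sum x S = sum x {1..n}"
    using assms(2) by (intro sum.mono_neutral_left) auto
  then show ?thesis
    using assms(1) by (simp add: prob_vector_def)
qed

lemma vertex_BG_plus_support: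
  assumes v: "family_weight F x \<in> vertices (BG_plus n)" and F: "F \<subseteq> coords n" and x: "prob_vector n x"
    and S: "S \<in> F" "0 < sum x S" and i: "i \<in> {1..n}" "0 < x i"
  shows "i \<in> S"
proof -
  have "S \<in> coords n"
    using S(1) F by blast
  obtain j where "j \<in> S" "x j \<noteq> 0"
    using S(2) sum.not_neutral_contains_not_neutral by (metis less_irrefl)
  moreover have "j \<in> {1..n}"
    using \<open>j \<in> S\<close> \<open>S \<in> coords n\<close> coords_subset by blast
  ultimately have j: "j \<in> S" "j \<in> {1..n}" "0 < x j"
    using x by (auto simp: prob_vector_def order_le_less)
  define t where "t = min (x i) (x j)"
  define y where "y s k = x k + s * (indicator {i} k - indicator {j} k)" for s k
  have sum_y: "sum (y s) T = sum x T + s * (indicator T i - indicator T j)" if "T \<in> coords n" for s T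
    unfolding y_def sum.distrib sum_move_mass[OF finite_coords[OF that]] ..
  have equal: "family_weight F (y (- t)) = family_weight F (y t)"
  proof (rule vertices_midpoint[OF v])
    have "prob_vector n (y s)" if "\<bar>s\<bar> = t" for s
      unfolding y_def using that i j by (intro prob_vector_move_mass[OF x i(1) j(2)]) (auto simp: t_def)
    then show "family_weight F (y (- t)) \<in> BG_plus n" "family_weight F (y t) \<in> BG_plus n"
      using i j by (simp_all add: family_weight_in_BG_plus[OF F] t_def)
    show "family_weight F x = (\<lambda>T. (family_weight F (y (- t)) T + family_weight F (y t) T) / 2)"
      using F sum_y by (auto simp: fun_eq_iff family_weight_def)
  qed
  have "sum (y (- t)) S = sum (y t) S"
    using fun_cong[OF equal, of S] S(1) by (simp add: family_weight_def)
  then have "t * (indicator S i - indicator S j) = 0"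
    using sum_y[OF \<open>S \<in> coords n\<close>, of "- t"] sum_y[OF \<open>S \<in> coords n\<close>, of t] by simp
  moreover have "0 < t"
    using i j by (simp add: t_def)
  ultimately show ?thesis
    using j(1) by (simp add: indicator_def)
qed

lemma vertex_BG_plus_is_indicator:
  assumes v: "v \<in> vertices (BG_plus n)"
  shows "\<exists>F\<in>families_with_common_point {1..n}. v = indicator F"
proof -
  obtain x where x: "prob_vector n x" and le: "\<forall>S\<in>coords n. 0 \<le> v S \<and> v S \<le> sum x S"
    using v by (auto simp: vertices_def BG_plus_iff)
  define F where "F = {S \<in> coords n. v S \<noteq> 0}"
  define T where "T = {i \<in> {1..n}. 0 < x i}"
  have F: "F \<subseteq> coords n"
    by (auto simp: F_def)
  have vF: "v = family_weight F x"
    unfolding F_def using vertex_BG_plus_eq_family_weight[OF v x] le by blast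
  have T_subset: "T \<subseteq> S" if "S \<in> F" for S
  proof -
    have "S \<in> coords n" "v S \<noteq> 0"
      using that by (simp_all add: F_def)
    then have "0 < v S"
      using le by (auto simp: order_le_less)
    also have "v S = sum x S"
      using that by (simp add: vF family_weight_def)
    finally show ?thesis
      using vertex_BG_plus_support[OF v[unfolded vF] F x that] by (auto simp: T_def)
  qed
  have "v = indicator F"
    using prob_vector_sum_eq_1[OF x] T_subset F coords_subset
    by (auto simp: vF fun_eq_iff family_weight_def T_def)
  moreover have "T \<noteq> {}"
    using prob_vector_support_nonempty[OF x] by (auto simp: T_def)
  then have "F \<in> families_with_common_point {1..n}"
    using F T_subset unfolding families_with_common_point_def coords_eq by blast
  ultimately show ?thesis
    by blast
qed

lemma vertices_BG_plus:
  assumes "n \<ge> 1"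
  shows "vertices (BG_plus n) = indicator ` families_with_common_point {1..n}"
proof
  show "vertices (BG_plus n) \<subseteq> indicator ` families_with_common_point {1..n}"
    using vertex_BG_plus_is_indicator by blast
  show "indicator ` families_with_common_point {1..n} \<subseteq> vertices (BG_plus n)"
  proof
    fix w :: "nat set \<Rightarrow> real"
    assume "w \<in> indicator ` families_with_common_point {1..n}"
    then obtain F where F: "F \<subseteq> coords n" "\<Inter>F \<noteq> {}" and w: "w = indicator F"
      by (auto simp: families_with_common_point_def coords_eq)
    obtain i where "i \<in> {1..n}" "\<forall>S\<in>F. i \<in> S"
    proof (cases "F = {}")
      case True
      then show ?thesis
        using that[of 1] assms by simp
    next
      case False
      then show ?thesis
        using that F coords_subset by blast
    qed
    then show "w \<in> vertices (BG_plus n)"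
      using indicator_in_vertices_BG_plus[OF F(1)] w by blast
  qed
qed

lemma inj_indicator: "inj (indicator :: 'a set \<Rightarrow> 'a \<Rightarrow> real)"
  by (rule injI) (metis indicator_eq_1_iff subsetI subset_antisym)

theorem theorem10:
  fixes n :: nat
  assumes "n \<ge> 1"
  shows "int (card (vertices (BG_plus n))) = fseq n + 1"
proof -
  have "card (vertices (BG_plus n)) = card (families_with_common_point {1..n})"
    unfolding vertices_BG_plus[OF assms] by (rule card_image[OF inj_on_subset[OF inj_indicator]]) simp
  then show ?thesis
    using card_families_with_common_point[of "{1..n}"] by simp
qed

end
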